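(* For every number $a$ and every integer $k\geq1$, $$\sum_{r=1}^{k}(-1)^{k-r}\sum_{\substack{k_1+\cdots+k_r=k\\ k_i\geq1}}\ \prod_{i=1}^{r}\frac{a(a-k_i)^{k_i-1}}{k_i!}=\frac{a(a+k)^{k-1}}{k!} \quad\text{and}\quad \sum_{r=1}^{k}(-1)^{k-r}\sum_{\substack{k_1+\cdots+k_r=k\\ k_i\geq1}}\ \prod_{i=1}^{r}\frac{a(a+k_i)^{k_i-1}}{k_i!}=\frac{a(a-k)^{k-1}}{k!},$$ where the inner sums run over all ordered $r$-tuples of positive integers with sum $k$.
   Context: The convention $0^0=1$ is used. *)

theory Defs
  imports Complex_Main
begin

definition compositions :: "nat \<Rightarrow> nat \<Rightarrow> nat list set" where
  "compositions k r = {ks. length ks = r \<and> (\<forall>i\<in>set ks. i \<ge> 1) \<and> sum_list ks = k}"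

end

theory Submission
  imports Defs
begin

text \<open>
  Write A_m(x) = x (x + m)^(m-1) (with A_0 = 1) for the Abel polynomials and
  P_x(z) = \<Sum>_m A_m(x) z^m / m!. Abel's identity
  \<Sum>_j (n choose j) A_j(x) A_(n-j)(y) = A_n(x + y) says P_x P_y = P_(x+y), hence P_a P_(-a) = 1.
  On the other hand, by the geometric series the alternating sum over the compositions of k
  with weights F_j is the k-th coefficient of 1 / \<Sum>_j (-1)^j F_j z^j (where F_0 = 1).
  Since (-1)^m A_m(-a) = a (a - m)^(m-1), the two identities read off the coefficients of
  1 / P_(-a)(z) = P_a(z) and of 1 / P_a(-z) = P_(-a)(-z).
\<close>

lemma alternating_sum_binomial_power_eq_0:
  fixes c :: "'a :: comm_ring_1"
  assumes "m < n"
  shows "(\<Sum>k\<le>n. (-1)^k * of_nat (n choose k) * (c + of_nat k)^m) = 0"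
  using assms
proof (induction m arbitrary: n c)
  case 0
  then show ?case using choose_alternating_sum[of n, where 'a='a] by simp
next
  case (Suc m)
  then obtain n' where n: "n = Suc n'" by (cases n) auto
  have "(\<Sum>k\<le>n. (-1)^k * of_nat (n choose k) * (c + of_nat k)^Suc m)
      = c * (\<Sum>k\<le>n. (-1)^k * of_nat (n choose k) * (c + of_nat k)^m)
        + (\<Sum>k\<le>n. (-1)^k * of_nat k * of_nat (n choose k) * (c + of_nat k)^m)"
    by (simp add: sum_distrib_left flip: sum.distrib) (simp add: algebra_simps)
  also have "(\<Sum>k\<le>n. (-1)^k * of_nat (n choose k) * (c + of_nat k)^m) = 0"
    using Suc by simp
  also have "(\<Sum>k\<le>n. (-1)^k * of_nat k * of_nat (n choose k) * (c + of_nat k)^m)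
      = (\<Sum>k\<le>n'. (-1)^Suc k * of_nat (Suc k * (Suc n' choose Suc k)) * (c + of_nat (Suc k))^m)"
    unfolding n by (simp only: sum.atMost_Suc_shift of_nat_mult) (simp add: algebra_simps)
  also have "\<dots> = - of_nat n * (\<Sum>k\<le>n'. (-1)^k * of_nat (n' choose k) * ((c + 1) + of_nat k)^m)"
    unfolding n Suc_times_binomial by (simp add: sum_distrib_left algebra_simps)
  also have "(\<Sum>k\<le>n'. (-1)^k * of_nat (n' choose k) * ((c + 1) + of_nat k)^m) = 0"
    using Suc.IH[of n' "c + 1"] Suc.prems n by simp
  finally show ?case by simp
qed

text \<open>For m \<ge> 1 this is x (x + m)^(m-1), and for m = 0 it gives the value 1 without a case split.\<close>
definition abel_poly :: "nat \<Rightarrow> 'a :: comm_ring_1 \<Rightarrow> 'a" where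
  "abel_poly m x = (x + of_nat m)^m - of_nat m * (x + of_nat m)^(m - 1)"

lemma abel_poly_0 [simp]: "abel_poly 0 x = 1"
  by (simp add: abel_poly_def)

lemma abel_poly_eq: "m \<ge> 1 \<Longrightarrow> abel_poly m x = x * (x + of_nat m)^(m - 1)"
  by (cases m) (simp_all add: abel_poly_def algebra_simps)

lemma abel_poly_at_0: "m \<ge> 1 \<Longrightarrow> abel_poly m 0 = 0"
  by (simp add: abel_poly_eq)

lemma abel_poly_uminus:
  assumes "m \<ge> 1"
  shows "abel_poly m (-x) = (-1)^m * (x * (x - of_nat m)^(m - 1))"
proof -
  obtain m' where m: "m = Suc m'" using assms by (cases m) auto
  have "(-x + of_nat m)^m' = (-1)^m' * (x - of_nat m)^m'"
    by (subst power_minus[symmetric]) simp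
  then show ?thesis by (simp add: abel_poly_eq m)
qed

lemma abel_poly_inverse_binomial_sum:
  fixes x :: "'a :: comm_ring_1"
  shows "(\<Sum>k\<le>m. of_nat (m choose k) * abel_poly k x * (-(x + of_nat k))^(m - k))
           = (if m = 0 then 1 else 0)"
proof (cases "m = 0")
  case False
  have summand: "abel_poly k x * (-(x + of_nat k))^(m - k)
                = (-1)^m * x * ((-1)^k * (x + of_nat k)^(m - 1))" if "k \<le> m" for k
  proof (cases "k = 0")
    case True
    with False obtain m' where "m = Suc m'" by (cases m) auto
    with True show ?thesis by (simp add: power_minus[of x])
  next
    case k: False
    have "abel_poly k x * (-(x + of_nat k))^(m - k)
            = (-1)^(m - k) * x * ((x + of_nat k)^(k - 1) * (x + of_nat k)^(m - k))"
      using k by (simp add: abel_poly_eq power_minus[of "x + of_nat k"] del: minus_add_distrib)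
    also have "(x + of_nat k)^(k - 1) * (x + of_nat k)^(m - k) = (x + of_nat k)^(m - 1)"
      using that k by (simp flip: power_add)
    also have "(-1 :: 'a)^(m - k) = (-1)^m * (-1)^k"
      using that by (simp flip: neg_one_power_add_eq_neg_one_power_diff power_add)
    finally show ?thesis by (simp only: ac_simps)
  qed
  have "(\<Sum>k\<le>m. of_nat (m choose k) * abel_poly k x * (-(x + of_nat k))^(m - k))
      = (-1)^m * x * (\<Sum>k\<le>m. (-1)^k * of_nat (m choose k) * (x + of_nat k)^(m - 1))"
    unfolding sum_distrib_left
  proof (intro sum.cong refl)
    fix k assume "k \<in> {..m}"
    then show "of_nat (m choose k) * abel_poly k x * (-(x + of_nat k))^(m - k)
        = (-1)^m * x * ((-1)^k * of_nat (m choose k) * (x + of_nat k)^(m - 1))"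
      by (simp only: mult.assoc summand atMost_iff) (simp only: ac_simps)
  qed
  also have "(\<Sum>k\<le>m. (-1)^k * of_nat (m choose k) * (x + of_nat k)^(m - 1)) = 0"
    using False by (intro alternating_sum_binomial_power_eq_0) simp
  finally show ?thesis using False by simp
qed simp

lemma binomial_mult_binomial_diff_commute:
  "(n choose k) * ((n - k) choose j) = (n choose j) * ((n - j) choose k)"
proof (cases "j + k \<le> n")
  case True
  then have "(n choose k) * ((n - k) choose j) = (n choose (j + k)) * ((j + k) choose k)"
    and "(n choose j) * ((n - j) choose k) = (n choose (j + k)) * ((j + k) choose j)"
    using choose_mult[of k "j + k" n] choose_mult[of j "j + k" n] by simp_all
  then show ?thesis using binomial_symmetric[of k "j + k"] by simp
next
  case False
  have "(n choose k) * ((n - k) choose j) = 0"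
    using False by (cases "k \<le> n") (simp_all add: binomial_eq_0)
  moreover have "(n choose j) * ((n - j) choose k) = 0"
    using False by (cases "j \<le> n") (simp_all add: binomial_eq_0)
  ultimately show ?thesis by (simp only:)
qed

lemma abel_binomial_identity:
  fixes x z :: "'a :: comm_ring_1"
  shows "(\<Sum>k\<le>n. of_nat (n choose k) * abel_poly k x * (z - x - of_nat k)^(n - k)) = z^n"
proof -
  have expand: "(z - x - of_nat k)^(n - k)
      = (\<Sum>j\<le>n. of_nat ((n - k) choose j) * z^j * (-(x + of_nat k))^(n - k - j))" for k
  proof -
    have "(z - x - of_nat k)^(n - k) = (z + (-(x + of_nat k)))^(n - k)"
      by (simp add: algebra_simps)
    also have "\<dots> = (\<Sum>j\<le>n - k. of_nat ((n - k) choose j) * z^j * (-(x + of_nat k))^(n - k - j))"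
      by (rule binomial_ring)
    also have "\<dots> = (\<Sum>j\<le>n. of_nat ((n - k) choose j) * z^j * (-(x + of_nat k))^(n - k - j))"
      by (rule sum.mono_neutral_left) (auto simp: binomial_eq_0)
    finally show ?thesis .
  qed
  have inner: "(\<Sum>k\<le>n. of_nat ((n - j) choose k) * abel_poly k x * (-(x + of_nat k))^(n - j - k))
      = (if j = n then 1 else 0)" if "j \<le> n" for j
  proof -
    have "(\<Sum>k\<le>n. of_nat ((n - j) choose k) * abel_poly k x * (-(x + of_nat k))^(n - j - k))
        = (\<Sum>k\<le>n - j. of_nat ((n - j) choose k) * abel_poly k x * (-(x + of_nat k))^(n - j - k))"
      by (rule sum.mono_neutral_right) (auto simp: binomial_eq_0)
    then show ?thesis
      using that abel_poly_inverse_binomial_sum[of "n - j" x] by simp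
  qed
  have "(\<Sum>k\<le>n. of_nat (n choose k) * abel_poly k x * (z - x - of_nat k)^(n - k))
     = (\<Sum>k\<le>n. \<Sum>j\<le>n. of_nat (n choose k) * of_nat ((n - k) choose j)
          * (z^j * abel_poly k x * (-(x + of_nat k))^(n - k - j)))"
    by (simp add: expand sum_distrib_left ac_simps)
  also have "\<dots> = (\<Sum>j\<le>n. \<Sum>k\<le>n. of_nat (n choose j) * of_nat ((n - j) choose k)
          * (z^j * abel_poly k x * (-(x + of_nat k))^(n - j - k)))"
    by (subst sum.swap) (simp only: binomial_mult_binomial_diff_commute diff_commute
          flip: of_nat_mult)
  also have "\<dots> = (\<Sum>j\<le>n. z^j * of_nat (n choose j)
        * (\<Sum>k\<le>n. of_nat ((n - j) choose k) * abel_poly k x * (-(x + of_nat k))^(n - j - k)))"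
    by (simp add: sum_distrib_left ac_simps)
  also have "\<dots> = (\<Sum>j\<le>n. if j = n then z^n else 0)"
    by (intro sum.cong refl) (subst inner, auto)
  also have "\<dots> = z^n"
    by simp
  finally show ?thesis .
qed

lemma abel_poly_convolution:
  fixes x y :: "'a :: comm_ring_1"
  shows "(\<Sum>j\<le>n. of_nat (n choose j) * abel_poly j x * abel_poly (n - j) y) = abel_poly n (x + y)"
proof (cases n)
  case (Suc n')
  define z where "z = x + y + of_nat n"
  have split: "abel_poly (n - j) y = (z - x - of_nat j)^(n - j) - of_nat (n - j) * (z - x - of_nat j)^(n' - j)"
    if "j \<le> n" for j
    using that by (simp add: abel_poly_def z_def Suc of_nat_diff algebra_simps)
  have absorb: "of_nat (n choose j) * of_nat (n - j) = (of_nat n * of_nat (n' choose j) :: 'a)" for j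
  proof -
    have "(n choose j) * (n - j) = n * (n' choose j)"
      using binomial_absorb_comp[of n j] Suc by (simp add: mult.commute)
    then show ?thesis by (metis of_nat_mult)
  qed
  have "(\<Sum>j\<le>n. of_nat (n choose j) * abel_poly j x * abel_poly (n - j) y)
      = (\<Sum>j\<le>n. of_nat (n choose j) * abel_poly j x * (z - x - of_nat j)^(n - j))
        - (\<Sum>j\<le>n. of_nat (n choose j) * of_nat (n - j) * abel_poly j x * (z - x - of_nat j)^(n' - j))"
    unfolding sum_subtractf[symmetric]
    by (intro sum.cong refl) (simp add: split algebra_simps)
  also have "(\<Sum>j\<le>n. of_nat (n choose j) * of_nat (n - j) * abel_poly j x * (z - x - of_nat j)^(n' - j))
      = of_nat n * (\<Sum>j\<le>n'. of_nat (n' choose j) * abel_poly j x * (z - x - of_nat j)^(n' - j))"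
  proof -
    have "(\<Sum>j\<le>n. of_nat (n choose j) * of_nat (n - j) * abel_poly j x * (z - x - of_nat j)^(n' - j))
        = (\<Sum>j\<le>n'. of_nat (n choose j) * of_nat (n - j) * abel_poly j x * (z - x - of_nat j)^(n' - j))"
      by (rule sum.mono_neutral_right) (auto simp: Suc)
    then show ?thesis
      by (simp only: absorb sum_distrib_left mult.assoc)
  qed
  finally show ?thesis
    by (simp only: abel_binomial_identity) (simp add: abel_poly_def z_def Suc)
qed simp

lemma abel_poly_exponential_convolution:
  fixes x y :: "'a :: field_char_0"
  shows "(\<Sum>j\<le>n. abel_poly j x / fact j * (abel_poly (n - j) y / fact (n - j)))
           = abel_poly n (x + y) / fact n"
proof -
  have "(\<Sum>j\<le>n. abel_poly j x / fact j * (abel_poly (n - j) y / fact (n - j)))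
      = (\<Sum>j\<le>n. of_nat (n choose j) * abel_poly j x * abel_poly (n - j) y) / fact n"
    unfolding sum_divide_distrib
    by (intro sum.cong refl) (simp add: binomial_fact field_simps)
  then show ?thesis by (simp only: abel_poly_convolution)
qed

lemma finite_compositions: "finite (compositions k r)"
proof (rule finite_subset)
  show "compositions k r \<subseteq> {ks. set ks \<subseteq> {0..k} \<and> length ks = r}"
    unfolding compositions_def using member_le_sum_list by fastforce
  show "finite {ks. set ks \<subseteq> {0..k} \<and> length ks = r}"
    by (rule finite_lists_length_eq) simp
qed

lemma compositions_0_right: "compositions k 0 = (if k = 0 then {[]} else {})"
  unfolding compositions_def by auto

lemma length_le_sum_list: "(\<forall>i\<in>set ks. i \<ge> (1::nat)) \<Longrightarrow> length ks \<le> sum_list ks"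
  by (induction ks) auto

lemma compositions_eq_empty: "k < r \<Longrightarrow> compositions k r = {}"
  unfolding compositions_def using length_le_sum_list by fastforce

lemma compositions_Suc:
  "compositions k (Suc r) = (\<lambda>(j, ks). j # ks) ` (SIGMA j:{1..k}. compositions (k - j) r)"
proof (rule set_eqI)
  fix ks
  show "ks \<in> compositions k (Suc r) \<longleftrightarrow> ks \<in> (\<lambda>(j, ks). j # ks) ` (SIGMA j:{1..k}. compositions (k - j) r)"
  proof
    assume "ks \<in> compositions k (Suc r)"
    then obtain j ks' where "ks = j # ks'" and "(j, ks') \<in> (SIGMA j:{1..k}. compositions (k - j) r)"
      unfolding compositions_def by (cases ks) auto
    then show "ks \<in> (\<lambda>(j, ks). j # ks) ` (SIGMA j:{1..k}. compositions (k - j) r)"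
      by force
  qed (auto simp: compositions_def)
qed

definition composition_sum :: "(nat \<Rightarrow> 'a :: comm_semiring_1) \<Rightarrow> nat \<Rightarrow> nat \<Rightarrow> 'a" where
  "composition_sum F k r = (\<Sum>ks\<in>compositions k r. \<Prod>i<r. F (ks!i))"

lemma composition_sum_0_right: "composition_sum F k 0 = (if k = 0 then 1 else 0)"
  by (simp add: composition_sum_def compositions_0_right)

lemma composition_sum_eq_0: "k < r \<Longrightarrow> composition_sum F k r = 0"
  by (simp add: composition_sum_def compositions_eq_empty)

lemma composition_sum_Suc: "composition_sum F k (Suc r) = (\<Sum>j=1..k. F j * composition_sum F (k - j) r)"
proof -
  have inj: "inj_on (\<lambda>(j, ks). j # ks) (SIGMA j:{1..k}. compositions (k - j) r)"
    by (auto simp: inj_on_def)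
  have "composition_sum F k (Suc r)
      = (\<Sum>(j, ks)\<in>(SIGMA j:{1..k}. compositions (k - j) r). \<Prod>i<Suc r. F ((j # ks)!i))"
    unfolding composition_sum_def compositions_Suc sum.reindex[OF inj]
    by (simp add: case_prod_beta)
  also have "\<dots> = (\<Sum>j=1..k. \<Sum>ks\<in>compositions (k - j) r. \<Prod>i<Suc r. F ((j # ks)!i))"
    by (rule sum.Sigma[symmetric]) (auto simp: finite_compositions)
  also have "\<dots> = (\<Sum>j=1..k. F j * composition_sum F (k - j) r)"
    by (simp only: composition_sum_def prod.lessThan_Suc_shift nth_Cons_0 nth_Cons_Suc
          sum_distrib_left)
  finally show ?thesis .
qed

lemma composition_sum_cong:
  assumes "\<And>j. j \<ge> 1 \<Longrightarrow> F j = G j"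
  shows "composition_sum F k r = composition_sum G k r"
  unfolding composition_sum_def
proof (intro sum.cong prod.cong refl)
  fix ks i assume "ks \<in> compositions k r" "i \<in> {..<r}"
  then have "ks!i \<in> set ks" and "\<forall>j\<in>set ks. j \<ge> 1"
    by (auto simp: compositions_def)
  then show "F (ks!i) = G (ks!i)" by (simp add: assms)
qed

definition alternating_composition_sum :: "(nat \<Rightarrow> 'a :: comm_ring_1) \<Rightarrow> nat \<Rightarrow> 'a" where
  "alternating_composition_sum F k = (\<Sum>r\<le>k. (-1)^(k + r) * composition_sum F k r)"

lemma alternating_composition_sum_0 [simp]: "alternating_composition_sum F 0 = 1"
  by (simp add: alternating_composition_sum_def composition_sum_0_right)

lemma alternating_composition_sum_conv_compositions:
  assumes "k \<ge> 1"
  shows "alternating_composition_sum F k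
           = (\<Sum>r=1..k. (-1)^(k - r) * (\<Sum>ks\<in>compositions k r. \<Prod>i<r. F (ks!i)))"
proof -
  have "{..k} = insert 0 {1..k}" by auto
  then have "alternating_composition_sum F k = (\<Sum>r=1..k. (-1)^(k + r) * composition_sum F k r)"
    using assms by (simp add: alternating_composition_sum_def composition_sum_0_right)
  then show ?thesis
    by (simp add: composition_sum_def neg_one_power_add_eq_neg_one_power_diff)
qed

lemma alternating_composition_sum_rec:
  assumes "k \<ge> 1"
  shows "alternating_composition_sum F k
           = (\<Sum>j=1..k. (-1)^(j + 1) * F j * alternating_composition_sum F (k - j))"
proof -
  obtain k' where k: "k = Suc k'" using assms by (cases k) auto
  have shift: "(\<Sum>r\<le>k'. (-1)^(k - j + r) * composition_sum F (k - j) r)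
                 = alternating_composition_sum F (k - j)" if "j \<ge> 1" for j
    unfolding alternating_composition_sum_def
    using that k by (intro sum.mono_neutral_right) (auto simp: composition_sum_eq_0)
  have "alternating_composition_sum F k
      = (\<Sum>r\<le>k'. (-1)^(k + Suc r) * composition_sum F k (Suc r))"
    unfolding alternating_composition_sum_def k sum.atMost_Suc_shift
    by (simp add: composition_sum_0_right)
  also have "\<dots> = (\<Sum>j=1..k. \<Sum>r\<le>k'. (-1)^(j + 1) * F j * ((-1)^(k - j + r) * composition_sum F (k - j) r))"
    unfolding composition_sum_Suc sum_distrib_left
    by (subst sum.swap) (intro sum.cong refl, simp add: algebra_simps flip: power_add)
  also have "\<dots> = (\<Sum>j=1..k. (-1)^(j + 1) * F j * alternating_composition_sum F (k - j))"
    by (intro sum.cong refl) (simp only: shift atLeastAtMost_iff flip: sum_distrib_left)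
  finally show ?thesis .
qed

lemma alternating_composition_sum_eqI:
  assumes F0: "F 0 = 1" and G0: "G 0 = 1"
    and convolution: "\<And>n. n \<ge> 1 \<Longrightarrow> (\<Sum>j\<le>n. (-1)^j * F j * G (n - j)) = 0"
  shows "alternating_composition_sum F k = G k"
proof (induction k rule: less_induct)
  case (less k)
  show ?case
  proof (cases "k = 0")
    case False
    have "{..k} = insert 0 {1..k}" by auto
    then have "G k + (\<Sum>j=1..k. (-1)^j * F j * G (k - j)) = 0"
      using convolution[of k] False F0 by simp
    then have "G k = - (\<Sum>j=1..k. (-1)^j * F j * G (k - j))"
      by (simp add: eq_neg_iff_add_eq_0)
    also have "\<dots> = (\<Sum>j=1..k. (-1)^(j + 1) * F j * G (k - j))"
      by (simp flip: sum_negf)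
    also have "\<dots> = (\<Sum>j=1..k. (-1)^(j + 1) * F j * alternating_composition_sum F (k - j))"
      using False by (intro sum.cong refl) (simp add: less.IH)
    also have "\<dots> = alternating_composition_sum F k"
      using False by (simp add: alternating_composition_sum_rec)
    finally show ?thesis ..
  qed (simp add: G0)
qed

lemma alternating_composition_sums_abel:
  fixes a :: "'a :: field_char_0"
  defines "P \<equiv> \<lambda>m. abel_poly m a / fact m"
    and "Q \<equiv> \<lambda>m. (-1)^m * abel_poly m (-a) / fact m"
  shows "alternating_composition_sum Q k = P k"
    and "alternating_composition_sum P k = Q k"
proof -
  have exp_conv_0: "(\<Sum>j\<le>n. abel_poly j x / fact j * (abel_poly (n - j) (-x) / fact (n - j))) = 0"
    if "n \<ge> 1" for n :: nat and x :: 'a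
    using abel_poly_exponential_convolution[where y = "-x"] that by (simp add: abel_poly_at_0)
  show "alternating_composition_sum Q k = P k"
  proof (rule alternating_composition_sum_eqI)
    fix n :: nat assume "n \<ge> 1"
    then show "(\<Sum>j\<le>n. (-1)^j * Q j * P (n - j)) = 0"
      using exp_conv_0[of n "-a"] by (simp add: P_def Q_def)
  qed (simp_all add: P_def Q_def)
  show "alternating_composition_sum P k = Q k"
  proof (rule alternating_composition_sum_eqI)
    fix n :: nat assume "n \<ge> 1"
    have "(\<Sum>j\<le>n. (-1)^j * P j * Q (n - j))
        = (-1)^n * (\<Sum>j\<le>n. abel_poly j a / fact j * (abel_poly (n - j) (-a) / fact (n - j)))"
      unfolding sum_distrib_left
    proof (intro sum.cong refl)
      fix j assume "j \<in> {..n}"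
      then have "(-1)^j * (-1)^(n - j) = ((-1)^n :: 'a)"
        by (simp flip: power_add)
      then show "(-1)^j * P j * Q (n - j)
          = (-1)^n * (abel_poly j a / fact j * (abel_poly (n - j) (-a) / fact (n - j)))"
        by (simp add: P_def Q_def field_simps)
    qed
    with exp_conv_0[of n a] \<open>n \<ge> 1\<close> show "(\<Sum>j\<le>n. (-1)^j * P j * Q (n - j)) = 0"
      by simp
  qed (simp_all add: P_def Q_def)
qed

theorem mainTheorem10:
  fixes a :: complex and k :: nat
  assumes "k \<ge> 1"
  shows "(\<Sum>r=1..k. (-1) ^ (k - r) *
            (\<Sum>ks\<in>compositions k r. \<Prod>i<r.
               a * (a - of_nat (ks!i)) ^ (ks!i - 1) / of_nat (fact (ks!i))))
           = a * (a + of_nat k) ^ (k - 1) / of_nat (fact k)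
       \<and> (\<Sum>r=1..k. (-1) ^ (k - r) *
            (\<Sum>ks\<in>compositions k r. \<Prod>i<r.
               a * (a + of_nat (ks!i)) ^ (ks!i - 1) / of_nat (fact (ks!i))))
           = a * (a - of_nat k) ^ (k - 1) / of_nat (fact k)"
proof -
  define P where "P = (\<lambda>m. abel_poly m a / fact m)"
  define Q where "Q = (\<lambda>m. (-1)^m * abel_poly m (-a) / fact m)"
  have P: "P m = a * (a + of_nat m) ^ (m - 1) / of_nat (fact m)" if "m \<ge> 1" for m
    using that by (simp add: P_def abel_poly_eq)
  have Q: "Q m = a * (a - of_nat m) ^ (m - 1) / of_nat (fact m)" if "m \<ge> 1" for m
    using that by (simp add: Q_def abel_poly_uminus flip: power_add mult.assoc)
  have reduce: "(\<Sum>r=1..k. (-1)^(k - r) * (\<Sum>ks\<in>compositions k r. \<Prod>i<r. F (ks!i)))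
      = alternating_composition_sum H k" if "\<And>m. m \<ge> 1 \<Longrightarrow> F m = H m" for F H :: "nat \<Rightarrow> complex"
    using assms composition_sum_cong[of F H k, OF that, unfolded composition_sum_def]
    by (simp add: alternating_composition_sum_conv_compositions)
  have "alternating_composition_sum Q k = P k" "alternating_composition_sum P k = Q k"
    unfolding P_def Q_def by (rule alternating_composition_sums_abel)+
  then show ?thesis
    using reduce[of "\<lambda>m. a * (a - of_nat m) ^ (m - 1) / of_nat (fact m)" Q]
      reduce[of "\<lambda>m. a * (a + of_nat m) ^ (m - 1) / of_nat (fact m)" P]
      P[OF assms] Q[OF assms]
    by (simp add: P Q)
qed

end
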